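(* Let $n\in\mathbb N$. Then: (i) $\delta(n)<\frac n4$ if and only if both (a) $n\ne p,2p,3p,4p$ for every prime $p$ (including $p=2$), and (b) $n\notin\{1,16,18,24,25,27,30,32,35,36,40,42,45,48,49,50,54,55,56,60,63,64,65,66,75,85,95\}$; (ii) $\delta(n)=\frac n4$ if and only if $n=64$.
   Context: $\mathbb N$ is the set of positive integers. For $n\in\mathbb N$, $\delta(n)=\min\{\,r+s : r,s\in\mathbb N,\ r\le s,\ rs=n\,\}$, i.e. the minimum of $d+n/d$ over positive divisors $d$ of $n$. *)

theory Defs
  imports Complex_Main "HOL-Computational_Algebra.Primes"
begin

definition delta :: "nat \<Rightarrow> nat" where
  "delta n = Min {r + s | r s. 0 < r \<and> 0 < s \<and> r \<le> s \<and> r * s = n}"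

end

(* The minimum of r + s over factorisations n = r s, r \<le> s, is below n / 4 exactly when some
   factorisation has 4 (r + s) < r s, i.e. (r - 4) (s - 4) > 16. This forces r \<ge> 5; conversely, for
   5 \<le> r \<le> s the failure (r - 4) (s - 4) \<le> 16 confines r s to at most 100. Hence for n > 100 the
   condition says that n splits into two factors \<ge> 5, which fails exactly for n = k p with k \<le> 4 and
   p prime: if the least divisor d \<ge> 5 of n has cofactor below 5 and n > 64, every proper divisor
   of d is below 5 and so d is prime. Equality 4 (r + s) = r s only holds for r s \<in> {64, 72, 100}, and
   of these only 64 has no better factorisation. The cases n \<le> 100 are settled by evaluation. *)
theory Submission
  imports Defs "HOL-Number_Theory.Pocklington"
begin

lemma finite_factor_sums:
  fixes n :: nat
  shows "finite {r + s | r s. 0 < r \<and> 0 < s \<and> r \<le> s \<and> r * s = n}"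
proof (rule finite_subset)
  have "r + s \<le> 2 * n" if "0 < r" "0 < s" "r * s = n" for r s
    using that mult_le_mono2[of 1 s r] mult_le_mono1[of 1 r s] by simp
  then show "{r + s | r s. 0 < r \<and> 0 < s \<and> r \<le> s \<and> r * s = n} \<subseteq> {..2 * n}"
    by auto
qed simp

lemma delta_le:
  assumes "0 < r" "r \<le> s" "r * s = n"
  shows "delta n \<le> r + s"
proof -
  have "r + s \<in> {r + s | r s. 0 < r \<and> 0 < s \<and> r \<le> s \<and> r * s = n}"
    using assms by (intro CollectI exI[of _ r] exI[of _ s]) auto
  then show ?thesis unfolding delta_def by (intro Min_le finite_factor_sums)
qed

lemma delta_attained:
  assumes "0 < n"
  obtains r s where "0 < r" "r \<le> s" "r * s = n" "delta n = r + s"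
proof -
  have "1 + n \<in> {r + s | r s. 0 < r \<and> 0 < s \<and> r \<le> s \<and> r * s = n}"
    using assms by force
  then have "delta n \<in> {r + s | r s. 0 < r \<and> 0 < s \<and> r \<le> s \<and> r * s = n}"
    unfolding delta_def by (intro Min_in finite_factor_sums) auto
  with that show ?thesis by auto
qed

lemma downclosed_at_delta_iff:
  assumes "0 < n" and downclosed: "\<And>x y. x \<le> y \<Longrightarrow> Q y \<Longrightarrow> Q x"
  shows "Q (delta n) \<longleftrightarrow> (\<exists>r s. 0 < r \<and> r \<le> s \<and> r * s = n \<and> Q (r + s))"
proof
  assume "Q (delta n)"
  then show "\<exists>r s. 0 < r \<and> r \<le> s \<and> r * s = n \<and> Q (r + s)"
    using delta_attained[OF \<open>0 < n\<close>] by metis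
next
  assume "\<exists>r s. 0 < r \<and> r \<le> s \<and> r * s = n \<and> Q (r + s)"
  then show "Q (delta n)" using delta_le downclosed by blast
qed

lemma ex_factor_pair_iff_ex_divisor:
  fixes n b :: nat and P :: "nat \<Rightarrow> nat \<Rightarrow> bool"
  assumes "n < (Suc b)\<^sup>2"
  shows "(\<exists>r s. 0 < r \<and> r \<le> s \<and> r * s = n \<and> P r s) \<longleftrightarrow>
         (\<exists>r\<in>{1..b}. r dvd n \<and> r * r \<le> n \<and> P r (n div r))"
proof
  assume "\<exists>r s. 0 < r \<and> r \<le> s \<and> r * s = n \<and> P r s"
  then obtain r s where rs: "0 < r" "r \<le> s" "r * s = n" "P r s" by blast
  then have "r * r \<le> n" using mult_le_mono2[of r s r] by simp
  moreover have "r \<le> b"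
  proof (rule ccontr)
    assume "\<not> r \<le> b"
    then have "Suc b * Suc b \<le> r * r" by (intro mult_le_mono) simp_all
    with \<open>r * r \<le> n\<close> assms show False by (simp add: power2_eq_square)
  qed
  moreover have "r dvd n" "n div r = s" using rs by auto
  ultimately show "\<exists>r\<in>{1..b}. r dvd n \<and> r * r \<le> n \<and> P r (n div r)"
    using rs by (intro bexI[of _ r]) auto
next
  assume "\<exists>r\<in>{1..b}. r dvd n \<and> r * r \<le> n \<and> P r (n div r)"
  then obtain r where r: "1 \<le> r" "r dvd n" "r * r \<le> n" "P r (n div r)" by auto
  then have "r * (n div r) = n" by simp
  moreover have "r \<le> n div r" using div_le_mono[OF r(3), of r] r(1) by simp
  ultimately show "\<exists>r s. 0 < r \<and> r \<le> s \<and> r * s = n \<and> P r s"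
    using r by (intro exI[of _ r] exI[of _ "n div r"]) auto
qed

lemma prime_iff_no_small_divisor:
  fixes m b :: nat
  assumes "m < (Suc b)\<^sup>2"
  shows "prime m \<longleftrightarrow> 1 < m \<and> (\<forall>d\<in>{2..b}. d\<^sup>2 \<le> m \<longrightarrow> \<not> d dvd m)"
proof
  assume "prime m"
  then have "\<forall>d. d dvd m \<and> d\<^sup>2 \<le> m \<longrightarrow> d = 1" by (simp add: prime_divisor_sqrt)
  with prime_gt_1_nat[OF \<open>prime m\<close>]
  show "1 < m \<and> (\<forall>d\<in>{2..b}. d\<^sup>2 \<le> m \<longrightarrow> \<not> d dvd m)" by auto
next
  assume h: "1 < m \<and> (\<forall>d\<in>{2..b}. d\<^sup>2 \<le> m \<longrightarrow> \<not> d dvd m)"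
  have "d = 1" if "d dvd m" "d\<^sup>2 \<le> m" for d
  proof (rule ccontr)
    assume "d \<noteq> 1"
    have "d\<^sup>2 < (Suc b)\<^sup>2" using that(2) assms by linarith
    then have "d < Suc b" by (rule power_less_imp_less_base) simp
    moreover have "d \<noteq> 0" using that(1) h by (cases "d = 0") auto
    ultimately show False using \<open>d \<noteq> 1\<close> h that by auto
  qed
  with h show "prime m" unfolding prime_divisor_sqrt by auto
qed

lemma four_mult_le_delta_square:
  fixes n :: nat
  shows "4 * n \<le> (delta n)\<^sup>2"
proof (cases "n = 0")
  case False
  then obtain r s where "r \<le> s" "r * s = n" "delta n = r + s"
    using delta_attained by (metis gr0I)
  moreover from \<open>r \<le> s\<close> obtain d where "s = r + d" using le_iff_add by blast
  ultimately have "(delta n)\<^sup>2 = 4 * n + d\<^sup>2"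
    by (simp add: power2_eq_square algebra_simps)
  then show ?thesis by simp
qed simp

lemma five_le_if_four_sum_le_mult:
  fixes r s :: nat
  assumes "0 < r" "r \<le> s" "4 * (r + s) \<le> r * s"
  shows "5 \<le> r"
proof (rule ccontr)
  assume "\<not> 5 \<le> r"
  then have "r * s \<le> 4 * s" by (intro mult_le_mono1) simp
  moreover have "4 * r + 4 * s \<le> r * s" using assms(3) by simp
  ultimately show False using \<open>0 < r\<close> by linarith
qed

lemma le_8_if_mult_le_four_sum:
  fixes r s :: nat
  assumes "r \<le> s" "r * s \<le> 4 * (r + s)"
  shows "r \<le> 8"
proof (rule ccontr)
  assume "\<not> r \<le> 8"
  then have "9 * s \<le> r * s" by (intro mult_le_mono1) simp
  moreover have "r * s \<le> 4 * r + 4 * s" using assms(2) by simp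
  ultimately show False using \<open>\<not> r \<le> 8\<close> \<open>r \<le> s\<close> by linarith
qed

lemma mult_le_100_if_mult_le_four_sum:
  fixes r s :: nat
  assumes "5 \<le> r" "r \<le> s" "r * s \<le> 4 * (r + s)"
  shows "r * s \<le> 100"
proof -
  from assms have "r = 5 \<or> r = 6 \<or> r = 7 \<or> r = 8"
    using le_8_if_mult_le_four_sum[OF assms(2,3)] by linarith
  with assms show ?thesis by (elim disjE) simp_all
qed

lemma four_sum_eq_mult_cases:
  fixes r s :: nat
  assumes "0 < r" "r \<le> s" "4 * (r + s) = r * s"
  shows "r * s = 64 \<or> r * s = 72 \<or> r * s = 100"
proof -
  have "5 \<le> r" using five_le_if_four_sum_le_mult[OF assms(1,2)] assms(3) by simp
  moreover have "r \<le> 8" using le_8_if_mult_le_four_sum[OF assms(2)] assms(3) by simp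
  ultimately have "r = 5 \<or> r = 6 \<or> r = 7 \<or> r = 8" by linarith
  with assms(3) show ?thesis by (elim disjE; simp; presburger)
qed

lemma prime_multiple_factor_le:
  fixes a b k p :: nat
  assumes "prime p" "a * b = k * p"
  shows "a \<le> k \<or> b \<le> k"
proof -
  have "a \<le> k \<or> b \<le> k" if "p dvd a" "a * b = k * p" for a b
  proof -
    from \<open>p dvd a\<close> obtain t where "a = p * t" by blast
    with \<open>a * b = k * p\<close> \<open>prime p\<close> have "t * b = k" by (simp add: prime_gt_0_nat)
    then show ?thesis
      using \<open>a = p * t\<close> mult_le_mono1[of 1 t b] by (cases "t = 0") auto
  qed
  moreover have "p dvd a \<or> p dvd b"
    using assms prime_dvd_mult_iff by (metis dvd_triv_right)
  ultimately show ?thesis using assms(2) by (metis mult.commute)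
qed

lemma prime_if_proper_divisors_less:
  fixes c d :: nat
  assumes "1 < d" "(c - 1) ^ 2 < d" and proper: "\<And>e. e dvd d \<Longrightarrow> e \<noteq> d \<Longrightarrow> e < c"
  shows "prime d"
  unfolding prime_nat_iff
proof (intro conjI allI impI)
  fix e assume "e dvd d"
  show "e = 1 \<or> e = d"
  proof (rule ccontr)
    assume "\<not> (e = 1 \<or> e = d)"
    from \<open>e dvd d\<close> obtain f where f: "d = e * f" by blast
    with \<open>1 < d\<close> have "0 < f" by (cases "f = 0") simp_all
    have "f \<noteq> d" using f \<open>0 < f\<close> \<open>\<not> (e = 1 \<or> e = d)\<close> by auto
    with f have "f < c" by (intro proper) simp_all
    moreover have "e < c" using \<open>e dvd d\<close> \<open>\<not> (e = 1 \<or> e = d)\<close> proper by blast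
    ultimately have "e * f \<le> (c - 1) * (c - 1)" by (intro mult_le_mono) simp_all
    with f \<open>(c - 1) ^ 2 < d\<close> show False by (simp add: power2_eq_square)
  qed
qed (use assms in simp)

lemma factor_pair_ge_or_prime_multiple:
  fixes c n :: nat
  assumes "(c - 1) ^ 3 < n"
  shows "(\<exists>a b. c \<le> a \<and> c \<le> b \<and> a * b = n) \<or> (\<exists>k p. 0 < k \<and> k < c \<and> prime p \<and> n = k * p)"
proof -
  have "c - 1 \<le> (c - 1) ^ 3"
    using le_cube[of "c - 1"] by (simp add: power3_eq_cube mult.assoc)
  with assms have "c \<le> n" "0 < n" by linarith+
  define d where "d = (LEAST d. c \<le> d \<and> d dvd n)"
  have d: "c \<le> d" "d dvd n"
    using LeastI[of "\<lambda>d. c \<le> d \<and> d dvd n" n] \<open>c \<le> n\<close> unfolding d_def by auto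
  have d_least: "d \<le> e" if "c \<le> e" "e dvd n" for e
    using Least_le[of "\<lambda>d. c \<le> d \<and> d dvd n" e] that unfolding d_def by auto
  define k where "k = n div d"
  have n: "n = k * d" using d(2) unfolding k_def by simp
  show ?thesis
  proof (cases "c \<le> k")
    case True
    with d n show ?thesis by (metis mult.commute)
  next
    case False
    have "0 < k" using n \<open>0 < n\<close> by simp
    have "(c - 1) ^ 2 < d"
    proof (rule ccontr)
      assume "\<not> (c - 1) ^ 2 < d"
      moreover have "k \<le> c - 1" using False by simp
      ultimately have "k * d \<le> (c - 1) * (c - 1) ^ 2" by (intro mult_le_mono) simp_all
      with n assms show False by (simp add: power_Suc2 power2_eq_square power3_eq_cube mult.assoc)
    qed
    moreover have "1 < d" using d(1) False \<open>0 < k\<close> by linarith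
    moreover have "e < c" if "e dvd d" "e \<noteq> d" for e
    proof (rule ccontr)
      assume "\<not> e < c"
      then have "d \<le> e" using d_least dvd_trans[OF that(1) d(2)] by simp
      moreover have "e \<le> d" using dvd_imp_le[OF that(1)] \<open>1 < d\<close> by simp
      ultimately show False using that(2) by simp
    qed
    ultimately have "prime d" by (intro prime_if_proper_divisors_less)
    with n \<open>0 < k\<close> False show ?thesis by auto
  qed
qed

definition small_multiple_of_prime :: "nat \<Rightarrow> bool" where
  "small_multiple_of_prime n \<longleftrightarrow> (\<exists>k\<in>{1..4}. \<exists>p. prime p \<and> n = k * p)"

lemma not_small_multiple_of_prime_iff:
  "\<not> small_multiple_of_prime n \<longleftrightarrow>
   (\<forall>p. prime p \<longrightarrow> n \<noteq> p \<and> n \<noteq> 2 * p \<and> n \<noteq> 3 * p \<and> n \<noteq> 4 * p)"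
proof -
  have "{1..4::nat} = {1, 2, 3, 4}" by auto
  then show ?thesis unfolding small_multiple_of_prime_def by (simp; blast)
qed

lemma ex_prime_cofactor_iff:
  fixes k n :: nat
  assumes "0 < k"
  shows "(\<exists>p. prime p \<and> n = k * p) \<longleftrightarrow> k dvd n \<and> prime (n div k)"
proof
  assume "\<exists>p. prime p \<and> n = k * p"
  then obtain p where "prime p" "n = k * p" by blast
  with assms show "k dvd n \<and> prime (n div k)" by simp
next
  assume "k dvd n \<and> prime (n div k)"
  then show "\<exists>p. prime p \<and> n = k * p" by (intro exI[of _ "n div k"]) simp
qed

lemma small_multiple_of_prime_iff_dvd:
  "small_multiple_of_prime n \<longleftrightarrow> (\<exists>k\<in>{1..4}. k dvd n \<and> prime (n div k))"
  unfolding small_multiple_of_prime_def by (intro bex_cong refl ex_prime_cofactor_iff) simp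

lemma ex_four_sum_less_iff_factors_ge_5:
  fixes n :: nat
  assumes "100 < n"
  shows "(\<exists>r s. 0 < r \<and> r \<le> s \<and> r * s = n \<and> 4 * (r + s) < n) \<longleftrightarrow>
         (\<exists>a b. 5 \<le> a \<and> 5 \<le> b \<and> a * b = n)"
proof
  assume "\<exists>r s. 0 < r \<and> r \<le> s \<and> r * s = n \<and> 4 * (r + s) < n"
  then obtain r s where rs: "0 < r" "r \<le> s" "r * s = n" "4 * (r + s) < n" by blast
  then have "4 * (r + s) \<le> r * s" by simp
  with rs(1,2) have "5 \<le> r" by (rule five_le_if_four_sum_le_mult)
  with rs show "\<exists>a b. 5 \<le> a \<and> 5 \<le> b \<and> a * b = n" by (intro exI[of _ r] exI[of _ s]) simp
next
  have sum_small: "\<exists>r s. 0 < r \<and> r \<le> s \<and> r * s = n \<and> 4 * (r + s) < n"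
    if "5 \<le> r" "r \<le> s" "r * s = n" for r s
  proof -
    have "\<not> r * s \<le> 4 * (r + s)"
    proof
      assume "r * s \<le> 4 * (r + s)"
      with mult_le_100_if_mult_le_four_sum[OF that(1,2)] that(3) assms show False by simp
    qed
    with that show ?thesis by (intro exI[of _ r] exI[of _ s]) auto
  qed
  assume "\<exists>a b. 5 \<le> a \<and> 5 \<le> b \<and> a * b = n"
  then obtain a b where "5 \<le> a" "5 \<le> b" "a * b = n" by blast
  then show "\<exists>r s. 0 < r \<and> r \<le> s \<and> r * s = n \<and> 4 * (r + s) < n"
    using sum_small[of a b] sum_small[of b a] by (cases "a \<le> b") (simp_all add: mult.commute)
qed

lemma factors_ge_5_iff_not_small_multiple_of_prime:
  fixes n :: nat
  assumes "64 < n"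
  shows "(\<exists>a b. 5 \<le> a \<and> 5 \<le> b \<and> a * b = n) \<longleftrightarrow> \<not> small_multiple_of_prime n"
proof
  assume "\<exists>a b. 5 \<le> a \<and> 5 \<le> b \<and> a * b = n"
  then obtain a b where "5 \<le> a" "5 \<le> b" "a * b = n" by blast
  show "\<not> small_multiple_of_prime n"
  proof
    assume "small_multiple_of_prime n"
    then obtain k p where "k \<in> {1..4}" "prime p" "n = k * p"
      unfolding small_multiple_of_prime_def by blast
    with prime_multiple_factor_le[of p a b k] \<open>a * b = n\<close> have "a \<le> k \<or> b \<le> k" by simp
    with \<open>5 \<le> a\<close> \<open>5 \<le> b\<close> \<open>k \<in> {1..4}\<close> show False by auto
  qed
next
  assume "\<not> small_multiple_of_prime n"
  have "\<not> (\<exists>k p. 0 < k \<and> k < 5 \<and> prime p \<and> n = k * p)"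
  proof
    assume "\<exists>k p. 0 < k \<and> k < 5 \<and> prime p \<and> n = k * p"
    then obtain k p where "0 < k" "k < 5" "prime p" "n = k * p" by blast
    moreover from this have "k \<in> {1..4}" by simp
    ultimately have "small_multiple_of_prime n"
      unfolding small_multiple_of_prime_def by blast
    with \<open>\<not> small_multiple_of_prime n\<close> show False by contradiction
  qed
  moreover have "(5 - 1) ^ 3 < n" using assms by simp
  ultimately show "\<exists>a b. 5 \<le> a \<and> 5 \<le> b \<and> a * b = n"
    using factor_pair_ge_or_prime_multiple by blast
qed

lemma four_delta_less_iff_large:
  assumes "100 < n"
  shows "4 * delta n < n \<longleftrightarrow> \<not> small_multiple_of_prime n"
proof -
  have "4 * delta n < n \<longleftrightarrow> (\<exists>r s. 0 < r \<and> r \<le> s \<and> r * s = n \<and> 4 * (r + s) < n)"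
    using assms by (intro downclosed_at_delta_iff) auto
  also have "\<dots> \<longleftrightarrow> (\<exists>a b. 5 \<le> a \<and> 5 \<le> b \<and> a * b = n)"
    using assms by (rule ex_four_sum_less_iff_factors_ge_5)
  also have "\<dots> \<longleftrightarrow> \<not> small_multiple_of_prime n"
    using assms by (intro factors_ge_5_iff_not_small_multiple_of_prime) simp
  finally show ?thesis .
qed

definition exceptional_numbers :: "nat set" where
  "exceptional_numbers = {1,16,18,24,25,27,30,32,35,36,40,42,45,48,49,50,54,55,56,60,63,64,65,66,75,85,95}"

(* The two sides of four_delta_less_iff_small for n \<le> 100, in the executable form given by
   ex_factor_pair_iff_ex_divisor and prime_iff_no_small_divisor with b = 10. *)
lemma four_divisor_sum_table:
  "list_all (\<lambda>n.
      (\<exists>r\<in>set [1..<11]. r dvd n \<and> r * r \<le> n \<and> 4 * (r + n div r) < n) \<longleftrightarrow>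
        \<not> (\<exists>k\<in>set [1..<5]. k dvd n \<and> 1 < n div k \<and>
             (\<forall>d\<in>set [2..<11]. d\<^sup>2 \<le> n div k \<longrightarrow> \<not> d dvd n div k)) \<and>
        n \<notin> exceptional_numbers)
    [1..<101]"
  by code_simp

lemma four_delta_less_iff_small:
  assumes "1 \<le> n" "n \<le> 100"
  shows "4 * delta n < n \<longleftrightarrow> \<not> small_multiple_of_prime n \<and> n \<notin> exceptional_numbers"
proof -
  have below: "m < (Suc 10)\<^sup>2" if "m \<le> n" for m :: nat using that assms(2) by simp
  have "4 * delta n < n \<longleftrightarrow> (\<exists>r s. 0 < r \<and> r \<le> s \<and> r * s = n \<and> 4 * (r + s) < n)"
    using assms by (intro downclosed_at_delta_iff) auto
  also have "\<dots> \<longleftrightarrow> (\<exists>r\<in>{1..10}. r dvd n \<and> r * r \<le> n \<and> 4 * (r + n div r) < n)"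
    by (rule ex_factor_pair_iff_ex_divisor[where P = "\<lambda>r s. 4 * (r + s) < n"])
      (use below in simp)
  finally have less: "4 * delta n < n \<longleftrightarrow>
      (\<exists>r\<in>{1..10}. r dvd n \<and> r * r \<le> n \<and> 4 * (r + n div r) < n)" .
  have prime: "prime (n div k) \<longleftrightarrow>
      1 < n div k \<and> (\<forall>d\<in>{2..10}. d\<^sup>2 \<le> n div k \<longrightarrow> \<not> d dvd n div k)" for k
    by (rule prime_iff_no_small_divisor) (use below[of "n div k"] in simp)
  have intervals: "{1..10::nat} = set [1..<11]" "{2..10::nat} = set [2..<11]" "{1..4::nat} = set [1..<5]"
    by auto
  have "n \<in> set [1..<101]" using assms by simp
  with four_divisor_sum_table[unfolded list_all_iff] show ?thesis
    unfolding less small_multiple_of_prime_iff_dvd prime intervals by blast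
qed

lemma four_delta_eq_iff:
  assumes "0 < n"
  shows "4 * delta n = n \<longleftrightarrow> n = 64"
proof
  assume "4 * delta n = n"
  obtain r s where rs: "0 < r" "r \<le> s" "r * s = n" "delta n = r + s"
    by (rule delta_attained[OF assms])
  with \<open>4 * delta n = n\<close> have "4 * (r + s) = r * s" by simp
  with rs have "n = 64 \<or> n = 72 \<or> n = 100" using four_sum_eq_mult_cases[OF rs(1,2)] by simp
  moreover have "4 * delta 72 < 72" using delta_le[of 8 9 72] by simp
  moreover have "4 * delta 100 < 100" using delta_le[of 10 10 100] by simp
  ultimately show "n = 64" using \<open>4 * delta n = n\<close> by auto
next
  assume "n = 64"
  have "16\<^sup>2 \<le> (delta 64)\<^sup>2" using four_mult_le_delta_square[of 64] by simp
  then have "16 \<le> delta 64" by (rule power2_le_imp_le) simp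
  moreover have "delta 64 \<le> 16" using delta_le[of 8 8 64] by simp
  ultimately show "4 * delta n = n" using \<open>n = 64\<close> by simp
qed

theorem proposition3p10:
  fixes n :: nat
  assumes "n \<ge> 1"
  shows "(real (delta n) < real n / 4 \<longleftrightarrow>
            ((\<forall>p. prime p \<longrightarrow> n \<noteq> p \<and> n \<noteq> 2 * p \<and> n \<noteq> 3 * p \<and> n \<noteq> 4 * p) \<and>
             n \<notin> {1,16,18,24,25,27,30,32,35,36,40,42,45,48,49,50,54,55,56,60,63,64,65,66,75,85,95}))
       \<and> (real (delta n) = real n / 4 \<longleftrightarrow> n = 64)"
proof -
  have "real (delta n) < real n / 4 \<longleftrightarrow> 4 * delta n < n"
    and "real (delta n) = real n / 4 \<longleftrightarrow> 4 * delta n = n" by linarith+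
  moreover have "4 * delta n < n \<longleftrightarrow> \<not> small_multiple_of_prime n \<and>
      n \<notin> {1,16,18,24,25,27,30,32,35,36,40,42,45,48,49,50,54,55,56,60,63,64,65,66,75,85,95}"
  proof (cases "n \<le> 100")
    case True
    with assms show ?thesis
      using four_delta_less_iff_small[unfolded exceptional_numbers_def] by blast
  next
    case False
    then show ?thesis using four_delta_less_iff_large by (auto simp: exceptional_numbers_def)
  qed
  moreover have "4 * delta n = n \<longleftrightarrow> n = 64" using assms by (intro four_delta_eq_iff) simp
  ultimately show ?thesis using not_small_multiple_of_prime_iff[of n] by blast
qed

end
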